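(* Let $\mathbb{F}$ be a finite field of characteristic $2$, let $h,n$ be positive integers, and let $S=\{\alpha_1,\ldots,\alpha_n\}$ be a multi-set of $n$ elements of $\mathbb{F}$. Let $A(S,h)=[a_{ij}]$ be the $h\times n$ matrix with $a_{ij}=\alpha_j^{2^{i-1}}$, and let $\mathcal{C}(S,h)\subseteq\mathbb{F}^n$ be the linear code with parity check matrix $A(S,h)$, i.e. the set of all $(x_1,\ldots,x_n)\in\mathbb{F}^n$ with $\sum_{i=1}^n\alpha_i^{2^{j-1}}x_i=0$ for $j=1,\ldots,h$. Then $\mathcal{C}(S,h)$ has minimum distance $h+1$ if and only if $S$ is $h$-wise independent over $\mathbb{F}_2$.
   Context: A multi-set $S\subseteq\mathbb{F}$ is $t$-wise independent over a subfield $\mathbb{F}'\subseteq\mathbb{F}$ if every sub-multi-set $T\subseteq S$ with $|T|\le t$ is linearly independent over $\mathbb{F}'$ (in particular a multi-set containing a repeated element or $0$ within such a $T$ is dependent). *)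

theory Defs
  imports Main "HOL-Library.Extended_Nat"
begin

text \<open>Vectors of \<open>F^n\<close> are functions \<open>nat \<Rightarrow> 'a\<close> vanishing outside \<open>{0..<n}\<close>;
  the multi-set \<open>S = {alpha_1,...,alpha_n}\<close> is an indexed family \<open>alpha :: nat \<Rightarrow> 'a\<close>
  on the index set \<open>{0..<n}\<close> (index i corresponds to the paper's i+1).\<close>

definition code_CSh :: "(nat \<Rightarrow> 'a::field) \<Rightarrow> nat \<Rightarrow> nat \<Rightarrow> (nat \<Rightarrow> 'a) set" where
  "code_CSh alpha n h = {x. (\<forall>i\<ge>n. x i = 0) \<and>
      (\<forall>j\<in>{1..h}. (\<Sum>i<n. alpha i ^ (2 ^ (j - 1)) * x i) = 0)}"

definition hamming_dist :: "nat \<Rightarrow> (nat \<Rightarrow> 'a) \<Rightarrow> (nat \<Rightarrow> 'a) \<Rightarrow> nat" where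
  "hamming_dist n x y = card {i. i < n \<and> x i \<noteq> y i}"

text \<open>Minimum distance of a code (infinity for a code with fewer than two words).\<close>
definition min_distance :: "nat \<Rightarrow> (nat \<Rightarrow> 'a) set \<Rightarrow> enat" where
  "min_distance n C = Inf {enat (hamming_dist n x y) | x y. x \<in> C \<and> y \<in> C \<and> x \<noteq> y}"

definition lin_indep_F2 :: "(nat \<Rightarrow> 'a::field) \<Rightarrow> nat set \<Rightarrow> bool" where
  "lin_indep_F2 alpha T \<longleftrightarrow>
     (\<forall>c. (\<forall>i\<in>T. c i \<in> {0, 1}) \<and> (\<Sum>i\<in>T. c i * alpha i) = 0 \<longrightarrow> (\<forall>i\<in>T. c i = 0))"

definition t_wise_indep_F2 :: "nat \<Rightarrow> (nat \<Rightarrow> 'a::field) \<Rightarrow> nat \<Rightarrow> bool" where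
  "t_wise_indep_F2 t alpha n \<longleftrightarrow>
     (\<forall>T. T \<subseteq> {..<n} \<and> card T \<le> t \<longrightarrow> lin_indep_F2 alpha T)"

end

theory Submission
  imports Defs "HOL-Library.FuncSet" "HOL-Computational_Algebra.Primes"
begin

text \<open>In characteristic 2 the maps \<open>x \<mapsto> x ^ 2 ^ j\<close> are additive and fix \<open>0\<close> and \<open>1\<close>.
  Hence an \<open>F_2\<close>-relation \<open>\<Sum>i\<in>T. c i * alpha i = 0\<close> is itself a codeword of weight at most
  \<open>card T\<close>; and any \<open>h + 1\<close> coordinates carry a nonzero codeword, because \<open>h\<close> homogeneous
  equations in \<open>h + 1\<close> unknowns over a finite field have a nontrivial solution (pigeonhole).
  Conversely, the difference of two codewords that differ on an \<open>F_2\<close>-independent set \<open>T\<close>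
  with \<open>card T \<le> h\<close> solves the Moore system \<open>\<Sum>i\<in>T. beta i ^ 2 ^ j * x i = 0\<close>
  (\<open>j < card T\<close>), which has only the trivial solution: adding \<open>beta k ^ 2 ^ j\<close> times equation
  \<open>j\<close> to equation \<open>j + 1\<close> eliminates \<open>x k\<close> and leaves the Moore system for
  \<open>gamma i = beta i * (beta i + beta k)\<close> on \<open>T - {k}\<close>, and the \<open>gamma i\<close> remain
  \<open>F_2\<close>-independent since \<open>\<Sum>i. c i * gamma i = s * (s + beta k)\<close> for
  \<open>s = \<Sum>i. c i * beta i\<close>.\<close>

lemma char2_power_two_power_add:
  "CHAR('a::comm_semiring_1) = 2 \<Longrightarrow> (a + b) ^ 2 ^ m = (a::'a) ^ 2 ^ m + b ^ 2 ^ m"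
  by (rule freshmans_dream') simp_all

lemma char2_power_two_power_sum:
  "CHAR('a::comm_semiring_1) = 2 \<Longrightarrow> (\<Sum>i\<in>A. f i) ^ 2 ^ m = (\<Sum>i\<in>A. (f i :: 'a) ^ 2 ^ m)"
  by (rule freshmans_dream_sum') simp_all

lemma lin_indep_F2D:
  assumes "lin_indep_F2 beta T" and "\<forall>i\<in>T. c i \<in> {0, 1}" and "(\<Sum>i\<in>T. c i * beta i) = 0"
    and "k \<in> T"
  shows "c k = 0"
  using assms unfolding lin_indep_F2_def by blast

lemma lin_indep_F2_nonzero:
  fixes beta :: "nat \<Rightarrow> 'a::field"
  assumes "lin_indep_F2 beta T" and "k \<in> T"
  shows "beta k \<noteq> 0"
proof
  define c :: "nat \<Rightarrow> 'a" where "c i = (if i = k then 1 else 0)" for i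
  assume "beta k = 0"
  then have "(\<Sum>i\<in>T. c i * beta i) = 0"
    by (auto simp: c_def intro: sum.neutral)
  moreover have "\<forall>i\<in>T. c i \<in> {0, 1}"
    by (simp add: c_def)
  ultimately have "c k = 0"
    using lin_indep_F2D assms by blast
  then show False
    by (simp add: c_def)
qed

lemma lin_indep_F2_shift:
  fixes beta :: "nat \<Rightarrow> 'a::field"
  assumes char: "CHAR('a) = 2" and "finite F" and "k \<notin> F"
    and indep: "lin_indep_F2 beta (insert k F)"
  shows "lin_indep_F2 (\<lambda>i. beta i * (beta i + beta k)) F"
  unfolding lin_indep_F2_def
proof (intro allI impI)
  fix c
  assume "(\<forall>i\<in>F. c i \<in> {0, 1}) \<and> (\<Sum>i\<in>F. c i * (beta i * (beta i + beta k))) = 0"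
  then have c01: "\<forall>i\<in>F. c i \<in> {0, 1}"
    and rel: "(\<Sum>i\<in>F. c i * (beta i * (beta i + beta k))) = 0" by auto
  define s where "s = (\<Sum>i\<in>F. c i * beta i)"
  have "s ^ 2 = (\<Sum>i\<in>F. (c i * beta i) ^ 2)"
    using char2_power_two_power_sum[OF char, of "\<lambda>i. c i * beta i" F 1] by (simp add: s_def)
  also have "\<dots> = (\<Sum>i\<in>F. c i * beta i ^ 2)"
    using c01 by (intro sum.cong) (auto simp: power_mult_distrib)
  finally have s_square: "s ^ 2 = (\<Sum>i\<in>F. c i * beta i ^ 2)" .
  have "s * (s + beta k) = (\<Sum>i\<in>F. c i * (beta i * (beta i + beta k)))"
    using s_square by (simp add: s_def algebra_simps power2_eq_square sum.distrib sum_distrib_left)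
  then have "s * (s + beta k) = 0"
    using rel by simp
  then obtain b where b: "b \<in> {0, 1}" "b * beta k + s = 0"
    using that[of 0] that[of 1] by (auto simp: add.commute)
  have "(\<Sum>i\<in>insert k F. (c(k := b)) i * beta i) = b * beta k + s"
    using \<open>finite F\<close> \<open>k \<notin> F\<close> by (auto simp: s_def intro!: sum.cong)
  with b(2) have "(\<Sum>i\<in>insert k F. (c(k := b)) i * beta i) = 0"
    by simp
  moreover have "\<forall>i\<in>insert k F. (c(k := b)) i \<in> {0, 1}"
    using c01 b(1) by simp
  ultimately have "(c(k := b)) i = 0" if "i \<in> F" for i
    using lin_indep_F2D[OF indep] that by blast
  then show "\<forall>i\<in>F. c i = 0"
    using \<open>k \<notin> F\<close> by (metis fun_upd_other)
qed

lemma moore_equation_shift: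
  fixes beta x :: "nat \<Rightarrow> 'a::field"
  assumes char: "CHAR('a) = 2" and "finite F" and "k \<notin> F"
    and eq: "(\<Sum>i\<in>insert k F. beta i ^ 2 ^ j * x i) = 0"
    and eq_Suc: "(\<Sum>i\<in>insert k F. beta i ^ 2 ^ Suc j * x i) = 0"
  shows "(\<Sum>i\<in>F. (beta i * (beta i + beta k)) ^ 2 ^ j * x i) = 0"
proof -
  define u where "u i = beta i ^ 2 ^ j" for i
  have square: "beta i ^ 2 ^ Suc j = u i * u i" for i
    unfolding u_def
    by (simp add: power_mult_distrib power_mult[symmetric] power2_eq_square[symmetric] mult.commute)
  have eq_u: "(\<Sum>i\<in>insert k F. u i * x i) = 0"
    using eq unfolding u_def .
  have eq_Suc_u: "(\<Sum>i\<in>insert k F. u i * u i * x i) = 0"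
    using eq_Suc unfolding square .
  have "(beta i * (beta i + beta k)) ^ 2 ^ j = u i * u i + u k * u i" for i
    by (simp add: u_def power_mult_distrib char2_power_two_power_add[OF char] algebra_simps)
  then have "(\<Sum>i\<in>F. (beta i * (beta i + beta k)) ^ 2 ^ j * x i)
      = (\<Sum>i\<in>F. u i * u i * x i) + u k * (\<Sum>i\<in>F. u i * x i)"
    by (simp add: sum.distrib sum_distrib_left algebra_simps)
  also have "\<dots> = - (u k * u k * x k) - u k * (u k * x k)"
    using eq_u eq_Suc_u \<open>finite F\<close> \<open>k \<notin> F\<close> by (simp add: add_eq_0_iff)
  also have "\<dots> = 0"
    using uminus_CHAR_2[OF char] by (simp add: algebra_simps)
  finally show ?thesis .
qed

lemma moore_system_trivial_kernel:
  fixes beta x :: "nat \<Rightarrow> 'a::field"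
  assumes char: "CHAR('a) = 2" and "finite T" and "lin_indep_F2 beta T"
    and "\<And>j. j < card T \<Longrightarrow> (\<Sum>i\<in>T. beta i ^ 2 ^ j * x i) = 0"
  shows "\<forall>i\<in>T. x i = 0"
  using assms(2-)
proof (induction T arbitrary: beta rule: finite_induct)
  case empty
  then show ?case by simp
next
  case (insert k F)
  have "\<forall>i\<in>F. x i = 0"
  proof (rule insert.IH)
    show "lin_indep_F2 (\<lambda>i. beta i * (beta i + beta k)) F"
      using lin_indep_F2_shift[OF char insert.hyps insert.prems(1)] .
    show "(\<Sum>i\<in>F. (beta i * (beta i + beta k)) ^ 2 ^ j * x i) = 0" if "j < card F" for j
      using that insert.hyps insert.prems(2)[of j] insert.prems(2)[of "Suc j"]
      by (intro moore_equation_shift[OF char]) simp_all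
  qed
  moreover have "beta k * x k + (\<Sum>i\<in>F. beta i * x i) = 0"
    using insert.prems(2)[of 0] insert.hyps by simp
  moreover have "beta k \<noteq> 0"
    using lin_indep_F2_nonzero[OF insert.prems(1)] by simp
  ultimately show ?case
    by simp
qed

lemma linear_system_nontrivial_solution:
  fixes a :: "nat \<Rightarrow> 'b \<Rightarrow> 'a::{comm_ring_1, finite}"
  assumes "finite T" and "m < card T"
  shows "\<exists>w. (\<forall>i. i \<notin> T \<longrightarrow> w i = 0) \<and> (\<exists>i\<in>T. w i \<noteq> 0)
           \<and> (\<forall>j<m. (\<Sum>i\<in>T. a j i * w i) = 0)"
proof -
  define A where "A = PiE T (\<lambda>_. UNIV :: 'a set)"
  define B where "B = PiE {..<m} (\<lambda>_. UNIV :: 'a set)"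
  define f where "f u = restrict (\<lambda>j. \<Sum>i\<in>T. a j i * u i) {..<m}" for u
  have "2 \<le> card (UNIV :: 'a set)"
    using card_mono[OF finite_UNIV, of "{0, 1 :: 'a}"] by simp
  then have "card B < card A"
    using assms by (simp add: A_def B_def card_PiE)
  moreover have "f ` A \<subseteq> B"
    by (auto simp: f_def B_def split: if_splits)
  ultimately have "\<not> inj_on f A"
    using card_inj_on_le[of f A B] by (auto simp: B_def finite_PiE)
  then obtain u v where uv: "u \<in> A" "v \<in> A" "u \<noteq> v" "f u = f v"
    unfolding inj_on_def by blast
  define w where "w i = (if i \<in> T then u i - v i else 0)" for i
  obtain i where "i \<in> T" "u i \<noteq> v i"
    using uv(1-3) PiE_ext[of u T _ v] unfolding A_def by blast
  then have "\<exists>i\<in>T. w i \<noteq> 0"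
    by (auto simp: w_def)
  moreover have "(\<Sum>i\<in>T. a j i * w i) = 0" if "j < m" for j
  proof -
    have "(\<Sum>i\<in>T. a j i * w i) = f u j - f v j"
      using that by (simp add: f_def w_def right_diff_distrib sum_subtractf)
    then show ?thesis
      using uv(4) by simp
  qed
  moreover have "\<forall>i. i \<notin> T \<longrightarrow> w i = 0"
    by (simp add: w_def)
  ultimately show ?thesis
    by blast
qed

lemma min_distance_eq_enat_iff:
  assumes "\<exists>x\<in>C. \<exists>y\<in>C. x \<noteq> y \<and> hamming_dist n x y \<le> d"
  shows "min_distance n C = enat d \<longleftrightarrow> (\<forall>x\<in>C. \<forall>y\<in>C. x \<noteq> y \<longrightarrow> d \<le> hamming_dist n x y)"
proof -
  define D where "D = {enat (hamming_dist n x y) | x y. x \<in> C \<and> y \<in> C \<and> x \<noteq> y}"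
  obtain x y where "x \<in> C" "y \<in> C" "x \<noteq> y" "hamming_dist n x y \<le> d"
    using assms by blast
  then have "Inf D \<le> enat d"
    unfolding D_def by (intro Inf_lower2[of "enat (hamming_dist n x y)"]) auto
  then have "Inf D = enat d \<longleftrightarrow> enat d \<le> Inf D"
    by auto
  also have "\<dots> \<longleftrightarrow> (\<forall>x\<in>C. \<forall>y\<in>C. x \<noteq> y \<longrightarrow> d \<le> hamming_dist n x y)"
    by (force simp: D_def le_Inf_iff)
  finally show ?thesis
    by (simp add: min_distance_def D_def)
qed

lemma mem_code_CSh_iff:
  assumes "T \<subseteq> {..<n}" and "\<forall>i. i \<notin> T \<longrightarrow> x i = 0"
  shows "x \<in> code_CSh alpha n h \<longleftrightarrow> (\<forall>j<h. (\<Sum>i\<in>T. alpha i ^ 2 ^ j * x i) = 0)"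
proof -
  have "(\<Sum>i<n. alpha i ^ 2 ^ j * x i) = (\<Sum>i\<in>T. alpha i ^ 2 ^ j * x i)" for j
    using assms by (intro sum.mono_neutral_right) auto
  then have "x \<in> code_CSh alpha n h \<longleftrightarrow> (\<forall>j\<in>{1..h}. (\<Sum>i\<in>T. alpha i ^ 2 ^ (j - 1) * x i) = 0)"
    using assms by (auto simp: code_CSh_def)
  also have "\<dots> \<longleftrightarrow> (\<forall>j<h. (\<Sum>i\<in>T. alpha i ^ 2 ^ j * x i) = 0)"
    unfolding image_Suc_lessThan[symmetric] by auto
  finally show ?thesis .
qed

lemma zero_in_code_CSh: "(\<lambda>_. 0) \<in> code_CSh alpha n h"
  by (simp add: code_CSh_def)

lemma code_CSh_diff:
  assumes "x \<in> code_CSh alpha n h" and "y \<in> code_CSh alpha n h"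
  shows "(\<lambda>i. x i - y i) \<in> code_CSh alpha n h"
  using assms by (simp add: code_CSh_def right_diff_distrib sum_subtractf)

lemma code_CSh_F2_relation:
  fixes alpha c :: "nat \<Rightarrow> 'a::field"
  assumes char: "CHAR('a) = 2" and "T \<subseteq> {..<n}"
    and c01: "\<forall>i\<in>T. c i \<in> {0, 1}" and rel: "(\<Sum>i\<in>T. c i * alpha i) = 0"
  shows "(\<lambda>i. if i \<in> T then c i else 0) \<in> code_CSh alpha n h"
proof -
  have "(\<Sum>i\<in>T. alpha i ^ 2 ^ j * c i) = (\<Sum>i\<in>T. c i * alpha i) ^ 2 ^ j" for j
    unfolding char2_power_two_power_sum[OF char]
    using c01 by (intro sum.cong) (auto simp: power_mult_distrib)
  then show ?thesis
    using assms by (subst mem_code_CSh_iff[of T]) auto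
qed

lemma code_CSh_short_word:
  fixes alpha :: "nat \<Rightarrow> 'a::{field, finite}"
  assumes "h < n"
  shows "\<exists>w\<in>code_CSh alpha n h. w \<noteq> (\<lambda>_. 0) \<and> hamming_dist n w (\<lambda>_. 0) \<le> h + 1"
proof -
  obtain w where supp: "\<forall>i. i \<notin> {..h} \<longrightarrow> w i = 0" and nz: "\<exists>i\<in>{..h}. w i \<noteq> 0"
    and eqs: "\<forall>j<h. (\<Sum>i\<in>{..h}. alpha i ^ 2 ^ j * w i) = 0"
    using linear_system_nontrivial_solution[of "{..h}" h "\<lambda>j i. alpha i ^ 2 ^ j"] by auto
  have "w \<in> code_CSh alpha n h"
    using assms supp eqs by (subst mem_code_CSh_iff[of "{..h}"]) auto
  moreover have "w \<noteq> (\<lambda>_. 0)"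
    using nz by auto
  moreover have "hamming_dist n w (\<lambda>_. 0) \<le> card {..h}"
    unfolding hamming_dist_def using supp by (intro card_mono) auto
  ultimately show ?thesis
    by auto
qed

lemma code_CSh_distance_if_t_wise_indep:
  fixes alpha :: "nat \<Rightarrow> 'a::field"
  assumes char: "CHAR('a) = 2" and indep: "t_wise_indep_F2 h alpha n"
    and x: "x \<in> code_CSh alpha n h" and y: "y \<in> code_CSh alpha n h" and "x \<noteq> y"
  shows "h + 1 \<le> hamming_dist n x y"
proof (rule ccontr)
  define T where "T = {i. i < n \<and> x i \<noteq> y i}"
  assume "\<not> h + 1 \<le> hamming_dist n x y"
  then have card_T: "card T \<le> h"
    by (simp add: hamming_dist_def T_def)
  have T_sub: "T \<subseteq> {..<n}"
    by (auto simp: T_def)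
  have diff_supp: "\<forall>i. i \<notin> T \<longrightarrow> x i - y i = 0"
    using x y by (auto simp: T_def code_CSh_def)
  have "\<forall>j<h. (\<Sum>i\<in>T. alpha i ^ 2 ^ j * (x i - y i)) = 0"
    using code_CSh_diff[OF x y] mem_code_CSh_iff[OF T_sub diff_supp] by blast
  then have "\<forall>i\<in>T. x i - y i = 0"
    using card_T indep T_sub unfolding t_wise_indep_F2_def
    by (intro moore_system_trivial_kernel[OF char finite_subset[OF T_sub]]) auto
  then have "x = y"
    using diff_supp by (auto intro: ext)
  with \<open>x \<noteq> y\<close> show False ..
qed

lemma t_wise_indep_if_code_CSh_distance:
  fixes alpha :: "nat \<Rightarrow> 'a::field"
  assumes char: "CHAR('a) = 2"
    and dist: "\<forall>x\<in>code_CSh alpha n h. \<forall>y\<in>code_CSh alpha n h. x \<noteq> y \<longrightarrow> h + 1 \<le> hamming_dist n x y"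
  shows "t_wise_indep_F2 h alpha n"
  unfolding t_wise_indep_F2_def lin_indep_F2_def
proof (intro allI impI ballI)
  fix T c k
  assume T: "T \<subseteq> {..<n} \<and> card T \<le> h"
    and rel: "(\<forall>i\<in>T. c i \<in> {0, 1}) \<and> (\<Sum>i\<in>T. c i * alpha i) = 0" and "k \<in> T"
  define w where "w i = (if i \<in> T then c i else 0)" for i
  have w_code: "w \<in> code_CSh alpha n h"
    unfolding w_def using code_CSh_F2_relation[OF char] T rel by blast
  have w_weight: "hamming_dist n w (\<lambda>_. 0) \<le> card T"
    unfolding hamming_dist_def w_def by (intro card_mono) (use T finite_subset in auto)
  have "w = (\<lambda>_. 0)"
  proof (rule ccontr)
    assume "w \<noteq> (\<lambda>_. 0)"
    with dist w_code zero_in_code_CSh have "h + 1 \<le> hamming_dist n w (\<lambda>_. 0)"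
      by blast
    with w_weight T show False
      by linarith
  qed
  then show "c k = 0"
    using \<open>k \<in> T\<close> by (metis w_def)
qed

theorem lemma9:
  fixes alpha :: "nat \<Rightarrow> 'a::{field, finite}"
    and h n :: nat
  assumes "CHAR('a) = 2"
    and "h > 0" and "n > 0"
    and "h < n"
  shows "min_distance n (code_CSh alpha n h) = enat (h + 1) \<longleftrightarrow> t_wise_indep_F2 h alpha n"
proof -
  obtain w where "w \<in> code_CSh alpha n h" "w \<noteq> (\<lambda>_. 0)" "hamming_dist n w (\<lambda>_. 0) \<le> h + 1"
    using code_CSh_short_word[OF \<open>h < n\<close>] by blast
  with zero_in_code_CSh have "min_distance n (code_CSh alpha n h) = enat (h + 1) \<longleftrightarrow>
      (\<forall>x\<in>code_CSh alpha n h. \<forall>y\<in>code_CSh alpha n h. x \<noteq> y \<longrightarrow> h + 1 \<le> hamming_dist n x y)"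
    by (intro min_distance_eq_enat_iff) blast
  also have "\<dots> \<longleftrightarrow> t_wise_indep_F2 h alpha n"
    using code_CSh_distance_if_t_wise_indep t_wise_indep_if_code_CSh_distance \<open>CHAR('a) = 2\<close>
    by blast
  finally show ?thesis .
qed

end
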